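(* For all integers $k\ge0$, $$G_{(k+2)_{ab}}(q;a,b)=(1+aq)(1+bq)\,G_{k_b}(q;aq,bq),$$ and consequently $\lim_{k\to\infty}G_{k_b}(q;a,b)=(-aq;q)_\infty(-bq;q)_\infty$.
   Context: Notation: $(x;q)_\infty=\prod_{n\ge0}(1-xq^n)$. Coloured integers are $k_{ab},k_a,k_b$ for integers $k\ge1$, ordered $1_{ab}<1_a<1_b<2_{ab}<2_a<2_b<\cdots$; colours are ordered $ab<a<b$. An admissible partition is a finite (possibly empty) sequence $\lambda_1,\dots,\lambda_s$ of coloured integers, with no part $1_{ab}$, such that for $1\le i<s$, (integer of $\lambda_i$)$-$(integer of $\lambda_{i+1}$) $\ge2$ if the colour of $\lambda_i$ is $ab$ or the colour of $\lambda_i$ is smaller than the colour of $\lambda_{i+1}$, and $\ge1$ otherwise. Its weight is $a^{u}b^{v}q^{n}$ where $n$ is the sum of the integers, $u$ the number of parts of colour $a$ or $ab$, $v$ the number of parts of colour $b$ or $ab$. For a coloured integer $\kappa$ with $k\ge1$, $G_\kappa(q;a,b)$ is the sum of weights of admissible partitions with largest part $\le\kappa$; by convention $G_{0_b}(q;a,b)=1$. $G_{k_b}(q;aq,bq)$ denotes $G_{k_b}$ with $a,b$ replaced by $aq,bq$. *)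

theory Defs
  imports "HOL-Analysis.Analysis"
begin

text \<open>Colours ab < a < b.\<close>
datatype colour = AB | CA | CB

fun colour_rank :: "colour \<Rightarrow> nat" where
  "colour_rank AB = 0" | "colour_rank CA = 1" | "colour_rank CB = 2"

type_synonym cint = "nat \<times> colour"

definition cint_le :: "cint \<Rightarrow> cint \<Rightarrow> bool" where
  "cint_le x y \<longleftrightarrow> fst x < fst y \<or> (fst x = fst y \<and> colour_rank (snd x) \<le> colour_rank (snd y))"

definition diff_ok :: "cint \<Rightarrow> cint \<Rightarrow> bool" where
  "diff_ok x y \<longleftrightarrow>
     (if snd x = AB \<or> colour_rank (snd x) < colour_rank (snd y)
      then int (fst x) - int (fst y) \<ge> 2
      else int (fst x) - int (fst y) \<ge> 1)"

definition admissible :: "cint list \<Rightarrow> bool" where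
  "admissible xs \<longleftrightarrow>
     (\<forall>p\<in>set xs. fst p \<ge> 1) \<and> (1, AB) \<notin> set xs \<and>
     (\<forall>i. Suc i < length xs \<longrightarrow> diff_ok (xs ! i) (xs ! Suc i))"

definition weight :: "cint list \<Rightarrow> 'r::comm_ring_1 \<Rightarrow> 'r \<Rightarrow> 'r \<Rightarrow> 'r" where
  "weight xs q a b =
     a ^ length (filter (\<lambda>p. snd p = CA \<or> snd p = AB) xs) *
     b ^ length (filter (\<lambda>p. snd p = CB \<or> snd p = AB) xs) *
     q ^ sum_list (map fst xs)"

definition G :: "cint \<Rightarrow> 'r::comm_ring_1 \<Rightarrow> 'r \<Rightarrow> 'r \<Rightarrow> 'r" where
  "G kappa q a b = (\<Sum>xs\<in>{xs. admissible xs \<and> (\<forall>p\<in>set xs. cint_le p kappa)}. weight xs q a b)"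

definition qpoch_inf :: "complex \<Rightarrow> complex \<Rightarrow> complex" where
  "qpoch_inf x q = (\<Prod>n. (1 - x * q ^ n))"

end

theory Submission
  imports Defs
begin

text \<open>Removing the largest part of an admissible partition gives linear recurrences for
  \<open>G \<kappa>\<close>, which combine into a three-term recurrence for \<open>D n = G (n, CB)\<close> alone.
  Both sides of the first identity, read as sequences in \<open>k\<close>, satisfy one and the same
  three-term recurrence and agree at \<open>k = 0, 1\<close>.
  For \<open>|q| < 1\<close> the increments of \<open>D n\<close> decay geometrically, so it has a limit
  \<open>L(a,b)\<close> with \<open>|L(a,b) - 1|\<close> small when \<open>a, b\<close> are small; passing to the limit in the
  first identity gives \<open>L(a,b) = (1+aq)(1+bq) L(aq,bq)\<close>, and iterating this while
  \<open>L(aq^m, bq^m) \<rightarrow> 1\<close> yields the infinite product.\<close>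

section \<open>Recurrences from the largest part\<close>

definition partitions_le :: "cint \<Rightarrow> cint list set" where
  "partitions_le \<kappa> = {xs. admissible xs \<and> (\<forall>p\<in>set xs. cint_le p \<kappa>)}"

definition part_weight :: "cint \<Rightarrow> 'r::comm_ring_1 \<Rightarrow> 'r \<Rightarrow> 'r \<Rightarrow> 'r" where
  "part_weight p q a b = (case snd p of AB \<Rightarrow> a * b | CA \<Rightarrow> a | CB \<Rightarrow> b) * q ^ fst p"

lemma G_eq_sum_partitions_le: "G \<kappa> q a b = (\<Sum>xs\<in>partitions_le \<kappa>. weight xs q a b)"
  by (simp add: G_def partitions_le_def)

lemma weight_Nil [simp]: "weight [] q a b = 1"
  by (simp add: weight_def)

lemma weight_Cons: "weight (p # xs) q a b = part_weight p q a b * weight xs q a b"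
  by (cases "snd p") (auto simp: weight_def part_weight_def algebra_simps power_add)

lemma admissible_Nil [simp]: "admissible []"
  by (simp add: admissible_def)

lemma admissible_Cons_iff:
  "admissible (p # xs) \<longleftrightarrow>
     fst p \<ge> 1 \<and> p \<noteq> (1, AB) \<and> admissible xs \<and> (xs = [] \<or> diff_ok p (hd xs))"
proof -
  have "(\<forall>i. Suc i < length (p # xs) \<longrightarrow> diff_ok ((p # xs) ! i) ((p # xs) ! Suc i)) \<longleftrightarrow>
        (xs \<noteq> [] \<longrightarrow> diff_ok p (hd xs)) \<and>
        (\<forall>i. Suc i < length xs \<longrightarrow> diff_ok (xs ! i) (xs ! Suc i))"
    by (auto simp: hd_conv_nth nth_Cons split: nat.split)
  then show ?thesis
    unfolding admissible_def by auto
qed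

lemma cint_le_refl: "cint_le p p"
  by (simp add: cint_le_def)

lemma diff_ok_imp_less: "diff_ok p p' \<Longrightarrow> fst p' < fst p"
  unfolding diff_ok_def by (auto split: if_splits)

lemma admissible_imp_decreasing:
  "admissible xs \<Longrightarrow> sorted_wrt (\<lambda>p p'. fst p' < fst p) xs"
  unfolding admissible_def
  by (subst sorted_wrt_iff_nth_Suc_transp) (auto simp: transp_def diff_ok_imp_less)

lemma finite_partitions_le: "finite (partitions_le \<kappa>)"
proof -
  have colours: "(UNIV :: colour set) = {AB, CA, CB}"
    using colour.exhaust by auto
  have "distinct xs" if "sorted_wrt (\<lambda>p p'. fst p' < fst p) xs" for xs :: "cint list"
    using that by (induction xs) auto
  then have "partitions_le \<kappa> \<subseteq> {xs. set xs \<subseteq> {..fst \<kappa>} \<times> UNIV \<and> distinct xs}"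
    by (auto simp: partitions_le_def cint_le_def admissible_imp_decreasing)
  moreover have "finite {xs. set xs \<subseteq> {..fst \<kappa>} \<times> (UNIV :: colour set) \<and> distinct xs}"
    by (intro finite_subset_distinct finite_SigmaI) (auto simp: colours)
  ultimately show ?thesis
    by (rule finite_subset)
qed

lemma partitions_le_Cons_bound:
  assumes "admissible (p # xs)" "cint_le p \<beta>"
  shows "\<forall>p'\<in>set (p # xs). cint_le p' \<beta>"
  using admissible_imp_decreasing[OF assms(1)] assms(2) by (auto simp: cint_le_def)

text \<open>\<open>\<pi>\<close> is the coloured integer preceding \<open>\<kappa>\<close>, and \<open>\<alpha>\<close> the largest part
  allowed to follow a part \<open>\<kappa>\<close>.\<close>
lemma partitions_le_split:
  assumes "fst \<kappa> \<ge> 1" "\<kappa> \<noteq> (1, AB)"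
    and below: "\<And>p. cint_le p \<kappa> \<and> p \<noteq> \<kappa> \<longleftrightarrow> cint_le p \<pi>"
    and after: "\<And>p. diff_ok \<kappa> p \<longleftrightarrow> cint_le p \<alpha>"
  shows "partitions_le \<kappa> = partitions_le \<pi> \<union> Cons \<kappa> ` partitions_le \<alpha>"
    and "partitions_le \<pi> \<inter> Cons \<kappa> ` partitions_le \<alpha> = {}"
proof -
  have not_below: "\<not> cint_le \<kappa> \<pi>"
    using below[of \<kappa>] by blast
  have tail: "\<kappa> # xs \<in> partitions_le \<kappa> \<longleftrightarrow> xs \<in> partitions_le \<alpha>" for xs
  proof (cases xs)
    case Nil
    then show ?thesis
      using assms(1,2) by (simp add: partitions_le_def admissible_Cons_iff cint_le_def)
  next
    case (Cons p ys)
    have adm: "admissible (\<kappa> # p # ys) \<longleftrightarrow> admissible (p # ys) \<and> cint_le p \<alpha>"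
      using assms(1,2) after[of p] by (simp add: admissible_Cons_iff)
    have "cint_le p \<kappa>" if "cint_le p \<alpha>"
      using after[of p] that diff_ok_imp_less[of \<kappa> p] by (simp add: cint_le_def)
    then have "\<forall>p'\<in>set (\<kappa> # p # ys). cint_le p' \<kappa>" if "admissible (p # ys)" "cint_le p \<alpha>"
      using partitions_le_Cons_bound[of p ys \<kappa>] cint_le_refl[of \<kappa>] that
      by (metis set_ConsD)
    moreover have "\<forall>p'\<in>set (p # ys). cint_le p' \<alpha>" if "admissible (p # ys)" "cint_le p \<alpha>"
      using partitions_le_Cons_bound[of p ys \<alpha>] that by blast
    ultimately show ?thesis
      unfolding Cons partitions_le_def mem_Collect_eq adm by auto
  qed
  have other: "p # xs \<in> partitions_le \<kappa> \<longleftrightarrow> p # xs \<in> partitions_le \<pi>" if "p \<noteq> \<kappa>" for p xs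
    using that below[of p] partitions_le_Cons_bound[of p xs \<pi>] partitions_le_Cons_bound[of p xs \<kappa>]
    unfolding partitions_le_def by auto
  show "partitions_le \<kappa> = partitions_le \<pi> \<union> Cons \<kappa> ` partitions_le \<alpha>"
  proof (intro set_eqI)
    fix xs
    show "xs \<in> partitions_le \<kappa> \<longleftrightarrow> xs \<in> partitions_le \<pi> \<union> Cons \<kappa> ` partitions_le \<alpha>"
    proof (cases xs)
      case Nil
      then show ?thesis by (simp add: partitions_le_def)
    next
      case (Cons p ys)
      then show ?thesis
        using tail[of ys] other[of p ys] not_below by (auto simp: partitions_le_def)
    qed
  qed
  show "partitions_le \<pi> \<inter> Cons \<kappa> ` partitions_le \<alpha> = {}"
    using not_below by (auto simp: partitions_le_def)
qed

lemma G_split: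
  assumes "fst \<kappa> \<ge> 1" "\<kappa> \<noteq> (1, AB)"
    and "\<And>p. cint_le p \<kappa> \<and> p \<noteq> \<kappa> \<longleftrightarrow> cint_le p \<pi>"
    and "\<And>p. diff_ok \<kappa> p \<longleftrightarrow> cint_le p \<alpha>"
  shows "G \<kappa> q a b = G \<pi> q a b + part_weight \<kappa> q a b * G \<alpha> q a b"
proof -
  note split = partitions_le_split[OF assms]
  have "G \<kappa> q a b = G \<pi> q a b + (\<Sum>xs\<in>Cons \<kappa> ` partitions_le \<alpha>. weight xs q a b)"
    unfolding G_eq_sum_partitions_le split(1)
    by (rule sum.union_disjoint) (use split(2) finite_partitions_le in auto)
  also have "(\<Sum>xs\<in>Cons \<kappa> ` partitions_le \<alpha>. weight xs q a b) = part_weight \<kappa> q a b * G \<alpha> q a b"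
    by (simp add: sum.reindex G_eq_sum_partitions_le weight_Cons sum_distrib_left)
  finally show ?thesis .
qed

lemma G_empty:
  assumes "\<And>p. fst p \<ge> 1 \<Longrightarrow> p \<noteq> (1, AB) \<Longrightarrow> \<not> cint_le p \<kappa>"
  shows "G \<kappa> q a b = 1"
proof -
  have "partitions_le \<kappa> = {[]}"
  proof (intro set_eqI iffI)
    fix xs assume "xs \<in> partitions_le \<kappa>"
    then show "xs \<in> {[]}"
      using assms by (cases xs) (auto simp: partitions_le_def admissible_Cons_iff)
  qed (simp add: partitions_le_def)
  then show ?thesis
    by (simp add: G_eq_sum_partitions_le)
qed

lemma G_zero: "G (0, c) q a b = 1"
  by (rule G_empty) (auto simp: cint_le_def)

lemma G_one_AB: "G (1, AB) q a b = 1"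
proof (rule G_empty)
  fix p :: cint
  assume "fst p \<ge> 1" "p \<noteq> (1, AB)"
  then show "\<not> cint_le p (1, AB)"
    by (cases p; cases "snd p") (auto simp: cint_le_def)
qed

lemma G_Suc_CB:
  "G (Suc n, CB) q a b = G (Suc n, CA) q a b + b * q ^ Suc n * G (n, CB) q a b"
proof -
  have "cint_le p (Suc n, CB) \<and> p \<noteq> (Suc n, CB) \<longleftrightarrow> cint_le p (Suc n, CA)" for p
    by (cases p; cases "snd p") (auto simp: cint_le_def)
  moreover have "diff_ok (Suc n, CB) p \<longleftrightarrow> cint_le p (n, CB)" for p
    by (cases p; cases "snd p") (auto simp: cint_le_def diff_ok_def)
  ultimately show ?thesis
    by (subst G_split[of _ "(Suc n, CA)" "(n, CB)"]) (auto simp: part_weight_def)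
qed

lemma G_Suc_CA:
  "G (Suc n, CA) q a b = G (Suc n, AB) q a b + a * q ^ Suc n * G (n, CA) q a b"
proof -
  have "cint_le p (Suc n, CA) \<and> p \<noteq> (Suc n, CA) \<longleftrightarrow> cint_le p (Suc n, AB)" for p
    by (cases p; cases "snd p") (auto simp: cint_le_def)
  moreover have "diff_ok (Suc n, CA) p \<longleftrightarrow> cint_le p (n, CA)" for p
    by (cases p; cases "snd p") (auto simp: cint_le_def diff_ok_def)
  ultimately show ?thesis
    by (subst G_split[of _ "(Suc n, AB)" "(n, CA)"]) (auto simp: part_weight_def)
qed

lemma G_Suc_Suc_AB:
  "G (Suc (Suc n), AB) q a b = G (Suc n, CB) q a b + a * b * q ^ Suc (Suc n) * G (n, CB) q a b"
proof -
  have "cint_le p (Suc (Suc n), AB) \<and> p \<noteq> (Suc (Suc n), AB) \<longleftrightarrow> cint_le p (Suc n, CB)" for p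
    by (cases p; cases "snd p") (auto simp: cint_le_def)
  moreover have "diff_ok (Suc (Suc n), AB) p \<longleftrightarrow> cint_le p (n, CB)" for p
    by (cases p; cases "snd p") (auto simp: cint_le_def diff_ok_def)
  ultimately show ?thesis
    by (subst G_split[of _ "(Suc n, CB)" "(n, CB)"]) (auto simp: part_weight_def)
qed

lemma G_one_CB: "G (Suc 0, CB) q a b = 1 + a * q + b * q"
  using G_Suc_CB[of 0 q a b] G_Suc_CA[of 0 q a b] G_one_AB[of q a b] by (simp add: G_zero)

lemma G_CB_recurrence:
  "G (Suc (Suc n), CB) q a b =
     (1 + (a + b) * q ^ (n + 2)) * G (Suc n, CB) q a b
     + a * b * q ^ (n + 2) * (1 - q ^ (n + 1)) * G (n, CB) q a b"
proof -
  have CB: "G (Suc (Suc n), CB) q a b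
      = G (Suc (Suc n), CA) q a b + b * q ^ (n + 2) * G (Suc n, CB) q a b"
    using G_Suc_CB[of "Suc n" q a b] by simp
  have CA: "G (Suc (Suc n), CA) q a b
      = G (Suc (Suc n), AB) q a b + a * q ^ (n + 2) * G (Suc n, CA) q a b"
    using G_Suc_CA[of "Suc n" q a b] by simp
  have CA': "G (Suc n, CA) q a b = G (Suc n, CB) q a b - b * q ^ (n + 1) * G (n, CB) q a b"
    using G_Suc_CB[of n q a b] by (simp add: eq_diff_eq)
  show ?thesis
    unfolding CB CA G_Suc_Suc_AB CA' by (simp add: algebra_simps)
qed

lemma linear_recurrence_unique:
  fixes x y :: "nat \<Rightarrow> 'a::semiring"
  assumes "\<And>n. x (Suc (Suc n)) = \<alpha> n * x (Suc n) + \<beta> n * x n"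
    and "\<And>n. y (Suc (Suc n)) = \<alpha> n * y (Suc n) + \<beta> n * y n"
    and "x 0 = y 0" "x (Suc 0) = y (Suc 0)"
  shows "x n = y n"
proof -
  have "x n = y n \<and> x (Suc n) = y (Suc n)"
    by (induction n) (use assms in simp_all)
  then show ?thesis ..
qed

lemma G_CB_shift:
  "G (Suc n, CB) q a b + a * b * q ^ (n + 2) * G (n, CB) q a b
     = (1 + a * q) * (1 + b * q) * G (n, CB) q (a * q) (b * q)"
  \<comment> \<open>both sides satisfy the recurrence of \<open>G (n, CB) q (a * q) (b * q)\<close>\<close>
proof (rule linear_recurrence_unique[where
      \<alpha> = "\<lambda>n. 1 + (a + b) * q ^ (n + 3)" and \<beta> = "\<lambda>n. a * b * q ^ (n + 4) * (1 - q ^ (n + 1))"])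
  fix n
  show "G (Suc (Suc (Suc n)), CB) q a b + a * b * q ^ (Suc (Suc n) + 2) * G (Suc (Suc n), CB) q a b =
    (1 + (a + b) * q ^ (n + 3)) * (G (Suc (Suc n), CB) q a b + a * b * q ^ (Suc n + 2) * G (Suc n, CB) q a b)
    + a * b * q ^ (n + 4) * (1 - q ^ (n + 1)) * (G (Suc n, CB) q a b + a * b * q ^ (n + 2) * G (n, CB) q a b)"
    by (simp add: G_CB_recurrence power_add algebra_simps eval_nat_numeral)
  show "(1 + a * q) * (1 + b * q) * G (Suc (Suc n), CB) q (a * q) (b * q) =
    (1 + (a + b) * q ^ (n + 3)) * ((1 + a * q) * (1 + b * q) * G (Suc n, CB) q (a * q) (b * q))
    + a * b * q ^ (n + 4) * (1 - q ^ (n + 1)) * ((1 + a * q) * (1 + b * q) * G (n, CB) q (a * q) (b * q))"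
    by (simp add: G_CB_recurrence power_add algebra_simps eval_nat_numeral)
qed (simp_all add: G_zero G_one_CB G_CB_recurrence algebra_simps eval_nat_numeral)


lemma G_AB_shift: "G (k + 2, AB) q a b = (1 + a * q) * (1 + b * q) * G (k, CB) q (a * q) (b * q)"
  using G_Suc_Suc_AB[of k q a b] G_CB_shift[of k q a b] by (simp add: numeral_2_eq_2)

section \<open>Convergence to the infinite product\<close>

definition growth :: "complex \<Rightarrow> complex \<Rightarrow> real" where
  "growth a b = norm a + norm b + 2 * norm a * norm b"

lemma growth_nonneg: "growth a b \<ge> 0"
  by (simp add: growth_def)

lemma growth_shift:
  assumes "norm q \<le> 1"
  shows "growth (a * q ^ m) (b * q ^ m) \<le> norm q ^ m * growth a b"
proof -
  have "norm q ^ m * norm q ^ m \<le> norm q ^ m"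
    using assms by (simp add: mult_left_le power_le_one)
  then have "norm a * norm b * (norm q ^ m * norm q ^ m) \<le> norm a * norm b * norm q ^ m"
    by (simp add: mult_left_mono)
  then show ?thesis
    by (simp add: growth_def norm_mult norm_power algebra_simps)
qed

lemma G_CB_step_bound:
  fixes q a b :: complex
  assumes q: "norm q \<le> 1"
    and bounds: "norm (G (n, CB) q a b) \<le> M" "norm (G (Suc n, CB) q a b) \<le> M"
  shows "norm (G (Suc (Suc n), CB) q a b - G (Suc n, CB) q a b) \<le> growth a b * norm q ^ (n + 2) * M"
proof -
  let ?t = "norm q ^ (n + 2)"
  have M: "M \<ge> 0"
    using bounds(1) norm_ge_zero order_trans by blast
  have "norm (q ^ (n + 1)) \<le> 1"
    unfolding norm_power using q by (intro power_le_one) auto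
  then have "norm (1 - q ^ (n + 1)) \<le> 2"
    using norm_triangle_ineq4[of 1 "q ^ (n + 1)"] by simp
  then have Y: "norm (a * b * q ^ (n + 2) * (1 - q ^ (n + 1)) * G (n, CB) q a b) \<le> norm a * norm b * ?t * 2 * M"
    unfolding norm_mult norm_power using bounds(1) by (intro mult_mono) (auto simp: mult_nonneg_nonneg)
  have X: "norm ((a + b) * q ^ (n + 2) * G (Suc n, CB) q a b) \<le> (norm a + norm b) * ?t * M"
    unfolding norm_mult norm_power using bounds(2) norm_triangle_ineq[of a b]
    by (intro mult_mono) (auto intro: mult_right_mono)
  have "G (Suc (Suc n), CB) q a b - G (Suc n, CB) q a b
      = (a + b) * q ^ (n + 2) * G (Suc n, CB) q a b
        + a * b * q ^ (n + 2) * (1 - q ^ (n + 1)) * G (n, CB) q a b"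
    by (simp add: G_CB_recurrence algebra_simps)
  then have "norm (G (Suc (Suc n), CB) q a b - G (Suc n, CB) q a b)
      \<le> norm ((a + b) * q ^ (n + 2) * G (Suc n, CB) q a b)
        + norm (a * b * q ^ (n + 2) * (1 - q ^ (n + 1)) * G (n, CB) q a b)"
    by (metis norm_triangle_ineq)
  also have "\<dots> \<le> (norm a + norm b) * ?t * M + norm a * norm b * ?t * 2 * M"
    using X Y by (rule add_mono)
  also have "\<dots> = growth a b * ?t * M"
    by (simp add: growth_def algebra_simps)
  finally show ?thesis .
qed

lemma G_CB_near_one:
  fixes q a b :: complex
  assumes q: "norm q \<le> 1"
  shows "norm (G (n, CB) q a b - 1) \<le> exp (growth a b * (\<Sum>i\<in>{1..n}. norm q ^ i)) - 1"
proof -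
  define B where "B n = exp (growth a b * (\<Sum>i\<in>{1..n}. norm q ^ i))" for n
  have B_Suc: "B (Suc n) = exp (growth a b * norm q ^ Suc n) * B n" for n
    by (simp add: B_def distrib_left exp_add)
  have B_mono: "B n \<le> B (Suc n)" for n
  proof -
    have "1 \<le> exp (growth a b * norm q ^ Suc n)"
      using growth_nonneg[of a b] by simp
    then show ?thesis
      unfolding B_Suc using mult_right_mono[of 1 _ "B n"] by (simp add: B_def)
  qed
  have "norm (G (n, CB) q a b - 1) \<le> B n - 1 \<and> norm (G (Suc n, CB) q a b - 1) \<le> B (Suc n) - 1"
  proof (induction n)
    case 0
    have "norm (a * q + b * q) \<le> (norm a + norm b) * norm q"
      using norm_triangle_ineq[of "a * q" "b * q"] by (simp add: norm_mult algebra_simps)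
    also have "\<dots> \<le> growth a b * norm q"
      by (simp add: growth_def mult_right_mono)
    also have "\<dots> \<le> B (Suc 0) - 1"
      using exp_ge_add_one_self[of "growth a b * norm q"] by (simp add: B_def del: exp_ge_add_one_self)
    finally show ?case
      by (simp add: G_zero G_one_CB B_def add.assoc)
  next
    case (Suc n)
    let ?D = "\<lambda>n. G (n, CB) q a b"
    have "norm (?D n) \<le> B (Suc n)"
      using Suc.IH B_mono[of n] norm_triangle_ineq2[of "?D n" 1] by simp
    moreover have "norm (?D (Suc n)) \<le> B (Suc n)"
      using Suc.IH norm_triangle_ineq2[of "?D (Suc n)" 1] by simp
    ultimately have step: "norm (?D (Suc (Suc n)) - ?D (Suc n)) \<le> growth a b * norm q ^ Suc (Suc n) * B (Suc n)"
      using G_CB_step_bound[OF q] by simp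
    have "norm (?D (Suc (Suc n)) - 1) \<le> norm (?D (Suc n) - 1) + norm (?D (Suc (Suc n)) - ?D (Suc n))"
      using norm_triangle_ineq[of "?D (Suc n) - 1" "?D (Suc (Suc n)) - ?D (Suc n)"] by simp
    also have "\<dots> \<le> (1 + growth a b * norm q ^ Suc (Suc n)) * B (Suc n) - 1"
      using Suc.IH step by (simp add: algebra_simps)
    also have "\<dots> \<le> B (Suc (Suc n)) - 1"
      unfolding B_Suc[of "Suc n"] by (intro diff_right_mono mult_right_mono) (simp_all add: B_def)
    finally show ?case
      using Suc.IH by simp
  qed
  then show ?thesis
    by (simp add: B_def)
qed

lemma convergent_if_summable_diff:
  fixes x :: "nat \<Rightarrow> 'a::real_normed_vector"
  assumes "summable (\<lambda>n. x (Suc n) - x n)"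
  shows "convergent x"
proof -
  have "(\<lambda>n. x 0 + (\<Sum>i<n. x (Suc i) - x i)) \<longlonglongrightarrow> x 0 + (\<Sum>n. x (Suc n) - x n)"
    using assms by (intro tendsto_add tendsto_const summable_LIMSEQ)
  then show ?thesis
    by (auto simp: sum_lessThan_telescope convergent_def)
qed

definition G_CB_lim :: "complex \<Rightarrow> complex \<Rightarrow> complex \<Rightarrow> complex" where
  "G_CB_lim q a b = lim (\<lambda>n. G (n, CB) q a b)"

context
  fixes q :: complex
  assumes q: "norm q < 1"
begin

lemma G_CB_near_one_uniform:
  "norm (G (n, CB) q a b - 1) \<le> exp (growth a b / (1 - norm q)) - 1"
proof -
  have "(\<Sum>i\<in>{1..n}. norm q ^ i) \<le> (\<Sum>i. norm q ^ i)"
    using q by (intro sum_le_suminf summable_geometric) auto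
  also have "\<dots> = 1 / (1 - norm q)"
    using q by (simp add: suminf_geometric)
  finally have "growth a b * (\<Sum>i\<in>{1..n}. norm q ^ i) \<le> growth a b / (1 - norm q)"
    using growth_nonneg[of a b] mult_left_mono by fastforce
  then have "exp (growth a b * (\<Sum>i\<in>{1..n}. norm q ^ i)) \<le> exp (growth a b / (1 - norm q))"
    by simp
  then show ?thesis
    using G_CB_near_one[of q n a b] q by linarith
qed

lemma G_CB_diff_bound:
  "norm (G (Suc n, CB) q a b - G (n, CB) q a b)
     \<le> growth a b * exp (growth a b / (1 - norm q)) * norm q ^ Suc n"
proof (cases n)
  case 0
  have "norm (a * q + b * q) \<le> (norm a + norm b) * norm q"
    using norm_triangle_ineq[of "a * q" "b * q"] by (simp add: norm_mult algebra_simps)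
  also have "\<dots> \<le> growth a b * exp (growth a b / (1 - norm q)) * norm q"
  proof -
    have "norm a + norm b \<le> growth a b * 1"
      by (simp add: growth_def)
    also have "\<dots> \<le> growth a b * exp (growth a b / (1 - norm q))"
      using q growth_nonneg[of a b] by (intro mult_left_mono) auto
    finally show ?thesis
      by (simp add: mult_right_mono)
  qed
  finally show ?thesis
    using 0 by (simp add: G_zero G_one_CB add.assoc)
next
  case (Suc m)
  have bound: "norm (G (k, CB) q a b) \<le> exp (growth a b / (1 - norm q))" for k
    using G_CB_near_one_uniform[of k a b] norm_triangle_ineq2[of "G (k, CB) q a b" 1] by simp
  show ?thesis
    using G_CB_step_bound[OF _ bound bound] q Suc by (simp add: algebra_simps)
qed

lemma G_CB_tendsto_lim: "(\<lambda>n. G (n, CB) q a b) \<longlonglongrightarrow> G_CB_lim q a b"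
proof -
  let ?K = "growth a b * exp (growth a b / (1 - norm q)) * norm q"
  have "summable (\<lambda>n. G (Suc n, CB) q a b - G (n, CB) q a b)"
  proof (rule summable_comparison_test')
    show "summable (\<lambda>n. ?K * norm q ^ n)"
      using q by (intro summable_mult summable_geometric) simp
    show "norm (G (Suc n, CB) q a b - G (n, CB) q a b) \<le> ?K * norm q ^ n" for n
      using G_CB_diff_bound[of n a b] by (simp add: mult.assoc)
  qed
  then show ?thesis
    unfolding G_CB_lim_def by (intro convergent_LIMSEQ_iff[THEN iffD1] convergent_if_summable_diff)
qed

lemma G_CB_lim_near_one: "norm (G_CB_lim q a b - 1) \<le> exp (growth a b / (1 - norm q)) - 1"
  by (rule Lim_norm_ubound[OF trivial_limit_sequentially tendsto_diff[OF G_CB_tendsto_lim tendsto_const]])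
    (intro always_eventually allI G_CB_near_one_uniform)

lemma G_CB_lim_shift_tendsto: "(\<lambda>m. G_CB_lim q (a * q ^ m) (b * q ^ m)) \<longlonglongrightarrow> 1"
proof -
  let ?e = "\<lambda>m. exp (norm q ^ m * growth a b / (1 - norm q)) - 1"
  have bound: "norm (G_CB_lim q (a * q ^ m) (b * q ^ m) - 1) \<le> ?e m" for m
  proof -
    have "growth (a * q ^ m) (b * q ^ m) / (1 - norm q) \<le> norm q ^ m * growth a b / (1 - norm q)"
      using growth_shift[of q a m b] q by (intro divide_right_mono) auto
    then have "exp (growth (a * q ^ m) (b * q ^ m) / (1 - norm q)) \<le> exp (norm q ^ m * growth a b / (1 - norm q))"
      by simp
    then show ?thesis
      using G_CB_lim_near_one[of "a * q ^ m" "b * q ^ m"] by linarith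
  qed
  have "?e \<longlonglongrightarrow> exp (0 * growth a b / (1 - norm q)) - 1"
    using q by (intro tendsto_intros LIMSEQ_power_zero) auto
  then have e: "?e \<longlonglongrightarrow> 0"
    by simp
  have "(\<lambda>m. G_CB_lim q (a * q ^ m) (b * q ^ m) - 1) \<longlonglongrightarrow> 0"
    by (rule Lim_null_comparison[OF always_eventually e]) (use bound in blast)
  then show ?thesis
    by (simp add: LIM_zero_iff)
qed

lemma G_CB_lim_shift: "G_CB_lim q a b = (1 + a * q) * (1 + b * q) * G_CB_lim q (a * q) (b * q)"
proof (rule LIMSEQ_unique)
  have "(\<lambda>n. q ^ (n + 2)) \<longlonglongrightarrow> 0"
    using q by (simp only: power_add) (intro tendsto_mult_left_zero LIMSEQ_power_zero, simp)
  then have "(\<lambda>n. G (Suc n, CB) q a b + a * b * q ^ (n + 2) * G (n, CB) q a b)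
      \<longlonglongrightarrow> G_CB_lim q a b + a * b * 0 * G_CB_lim q a b"
    by (intro tendsto_intros G_CB_tendsto_lim LIMSEQ_Suc)
  then show "(\<lambda>n. (1 + a * q) * (1 + b * q) * G (n, CB) q (a * q) (b * q)) \<longlonglongrightarrow> G_CB_lim q a b"
    by (simp only: G_CB_shift mult_zero_right mult_zero_left add_0_right)
  show "(\<lambda>n. (1 + a * q) * (1 + b * q) * G (n, CB) q (a * q) (b * q))
      \<longlonglongrightarrow> (1 + a * q) * (1 + b * q) * G_CB_lim q (a * q) (b * q)"
    by (intro tendsto_intros G_CB_tendsto_lim)
qed

lemma G_CB_lim_shift_iter:
  "G_CB_lim q a b = (\<Prod>j<m. (1 + a * q ^ Suc j) * (1 + b * q ^ Suc j)) * G_CB_lim q (a * q ^ m) (b * q ^ m)"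
proof (induction m)
  case (Suc m)
  then show ?case
    using G_CB_lim_shift[of "a * q ^ m" "b * q ^ m"] by (simp add: algebra_simps)
qed simp

lemma qpoch_inf_partial_tendsto: "(\<lambda>m. \<Prod>j<m. 1 + a * q ^ Suc j) \<longlonglongrightarrow> qpoch_inf (- a * q) q"
proof -
  have "summable (\<lambda>n. norm (1 + a * q ^ Suc n - 1))"
    using q by (simp add: norm_mult norm_power summable_geometric)
  then have "convergent_prod (\<lambda>n. 1 + a * q ^ Suc n)"
    by (intro abs_convergent_prod_imp_convergent_prod summable_imp_abs_convergent_prod)
  then have "(\<lambda>m. \<Prod>j<m. 1 + a * q ^ Suc j) \<longlonglongrightarrow> prodinf (\<lambda>n. 1 + a * q ^ Suc n)"
    by (subst LIMSEQ_lessThan_iff_atMost) (rule convergent_prod_LIMSEQ)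
  moreover have "qpoch_inf (- a * q) q = prodinf (\<lambda>n. 1 + a * q ^ Suc n)"
    by (simp add: qpoch_inf_def mult.assoc)
  ultimately show ?thesis
    by simp
qed

lemma G_CB_tendsto_qpoch: "(\<lambda>k. G (k, CB) q a b) \<longlonglongrightarrow> qpoch_inf (- a * q) q * qpoch_inf (- b * q) q"
proof -
  have "(\<lambda>m. (\<Prod>j<m. 1 + a * q ^ Suc j) * (\<Prod>j<m. 1 + b * q ^ Suc j) * G_CB_lim q (a * q ^ m) (b * q ^ m))
      \<longlonglongrightarrow> qpoch_inf (- a * q) q * qpoch_inf (- b * q) q * 1"
    by (intro tendsto_mult qpoch_inf_partial_tendsto G_CB_lim_shift_tendsto)
  then have lim_eq: "G_CB_lim q a b = qpoch_inf (- a * q) q * qpoch_inf (- b * q) q"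
    using G_CB_lim_shift_iter[of a b] by (simp add: prod.distrib LIMSEQ_const_iff)
  show ?thesis
    using G_CB_tendsto_lim[of a b] unfolding lim_eq .
qed

end

theorem mainTheorem5:
  shows "(\<forall>(k::nat) (q::complex) a b.
            G (k + 2, AB) q a b = (1 + a * q) * (1 + b * q) * G (k, CB) q (a * q) (b * q))
       \<and> (\<forall>(q::complex) a b. norm q < 1 \<longrightarrow>
            (\<lambda>k. G (k, CB) q a b) \<longlonglongrightarrow> qpoch_inf (- a * q) q * qpoch_inf (- b * q) q)"
  by (intro conjI allI impI G_AB_shift G_CB_tendsto_qpoch)

end
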